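(* Let $k\geq3$, $A=\{0,1,\dots,k-1\}$, $N=k-1$ and let $T\colon A^{N^2}\to A$ be given by $T(x_{1,1},\dots,x_{1,N},\dots,x_{N,1},\dots,x_{N,N})=1$ if $x_{i,j}=i$ for all $i,j\in\{1,\dots,N\}$ or $x_{i,j}=j$ for all $i,j\in\{1,\dots,N\}$, and $0$ otherwise. Then for all $1\leq n<k-1$, \[\langle\{T\}\rangle^{(n)}=J_n(A)\cup\{c^n_0\},\] where $c^n_0$ is the $n$-ary constant zero function.
   Context: $\langle\{T\}\rangle$ denotes the clone generated by $T$ (all term operations of positive arity of the algebra $(A;T)$, including projections), and $\langle\{T\}\rangle^{(n)}$ its $n$-ary members. $J_n(A)$ is the set of $n$-ary projections $(x_1,\dots,x_n)\mapsto x_i$, $1\leq i\leq n$. *)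

theory Defs
  imports Main
begin

text \<open>An n-ary operation is identified with its restriction to A^n
  (lists of length n with entries in A); outside it the value is undefined.\<close>

definition restr :: "nat \<Rightarrow> nat \<Rightarrow> (nat list \<Rightarrow> nat) \<Rightarrow> (nat list \<Rightarrow> nat)" where
  "restr k n f = (\<lambda>xs. if length xs = n \<and> set xs \<subseteq> {..<k} then f xs else undefined)"

inductive_set term_op :: "nat \<Rightarrow> (nat list \<Rightarrow> nat) \<Rightarrow> nat \<Rightarrow> (nat list \<Rightarrow> nat) set"
  for m :: nat and T :: "nat list \<Rightarrow> nat" and n :: nat where
  proj: "i < n \<Longrightarrow> (\<lambda>xs. xs ! i) \<in> term_op m T n"
| app: "(\<And>j. j < m \<Longrightarrow> gs j \<in> term_op m T n) \<Longrightarrow>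
        (\<lambda>xs. T (map (\<lambda>j. gs j xs) [0..<m])) \<in> term_op m T n"

definition clone_n :: "nat \<Rightarrow> nat \<Rightarrow> (nat list \<Rightarrow> nat) \<Rightarrow> nat \<Rightarrow> (nat list \<Rightarrow> nat) set" where
  "clone_n k m T n = restr k n ` term_op m T n"

definition projections :: "nat \<Rightarrow> nat \<Rightarrow> (nat list \<Rightarrow> nat) set" where
  "projections k n = {restr k n (\<lambda>xs. xs ! i) | i. i < n}"

text \<open>The operation T of arity N^2, N = k - 1; the argument x_{i,j} (1 \<le> i,j \<le> N)
  sits at list position (i-1)*N + (j-1).\<close>
definition T_op :: "nat \<Rightarrow> nat list \<Rightarrow> nat" where
  "T_op k xs = (let N = k - 1 in
     if (\<forall>i\<in>{1..N}. \<forall>j\<in>{1..N}. xs ! ((i - 1) * N + (j - 1)) = i) \<or>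
        (\<forall>i\<in>{1..N}. \<forall>j\<in>{1..N}. xs ! ((i - 1) * N + (j - 1)) = j)
     then 1 else 0)"

end

theory Submission
  imports Defs
begin

text \<open>Every term operation of (A; T) acts on an argument tuple xs as a projection or as
  the constant 0, so its values lie in the set of entries of xs together with 0.  If all
  N^2 arguments of T take values in such a set, T returns 0: the value 1 would require the
  rows (or the columns) of its argument matrix to exhibit all of 1, ..., N, whereas a
  tuple of length n < N has fewer than N distinct entries.  The constant 0 itself arises
  as T(x_1, ..., x_1).\<close>

lemma matrix_index_less:
  fixes N i j :: nat
  assumes "1 \<le> i" "i \<le> N" "1 \<le> j" "j \<le> N"
  shows "(i - 1) * N + (j - 1) < N^2"
proof -
  have "(i - 1) * N + (j - 1) < (i - 1) * N + N" using assms by simp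
  also have "\<dots> = i * N" using assms by (cases i) auto
  also have "\<dots> \<le> N * N" using assms by simp
  finally show ?thesis by (simp add: power2_eq_square)
qed

lemma T_op_nonzero_imp_range_subset:
  assumes "(k - 1)^2 \<le> length L" and "T_op k L \<noteq> 0"
  shows "{1..k - 1} \<subseteq> set L"
proof
  define N where "N = k - 1"
  let ?x = "\<lambda>i j. L ! ((i - 1) * N + (j - 1))"
  fix v assume "v \<in> {1..k - 1}"
  then have v: "v \<in> {1..N}" unfolding N_def .
  have rows_or_columns: "(\<forall>i\<in>{1..N}. \<forall>j\<in>{1..N}. ?x i j = i) \<or> (\<forall>i\<in>{1..N}. \<forall>j\<in>{1..N}. ?x i j = j)"
    using assms(2) unfolding T_op_def Let_def N_def[symmetric] by argo
  have "?x v 1 \<in> set L" "?x 1 v \<in> set L"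
    using matrix_index_less[of v N 1] matrix_index_less[of 1 N v] v assms(1)
    unfolding N_def by auto
  moreover have "?x v 1 = v \<or> ?x 1 v = v"
  proof -
    have "1 \<in> {1..N}" using v by simp
    with rows_or_columns v show ?thesis by blast
  qed
  ultimately show "v \<in> set L" by auto
qed

lemma T_op_eq_0_if_few_values:
  assumes "(k - 1)^2 \<le> length L" and "set L \<subseteq> insert 0 X" and "finite X" and "card X < k - 1"
  shows "T_op k L = 0"
proof (rule ccontr)
  assume "T_op k L \<noteq> 0"
  then have "{1..k - 1} \<subseteq> X"
    using T_op_nonzero_imp_range_subset assms(1,2) by fastforce
  then have "card {1..k - 1} \<le> card X" using assms(3) by (rule card_mono[rotated])
  with assms(4) show False by simp
qed

lemma restr_eq_iff:
  "restr k n f = restr k n g \<longleftrightarrow> (\<forall>xs. length xs = n \<and> set xs \<subseteq> {..<k} \<longrightarrow> f xs = g xs)"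
  unfolding restr_def by (auto simp: fun_eq_iff)

lemma value_in_args_if_proj_or_zero:
  assumes "restr k n g \<in> projections k n \<union> {restr k n (\<lambda>xs. 0)}"
    and "length xs = n" and "set xs \<subseteq> {..<k}"
  shows "g xs \<in> insert 0 (set xs)"
  using assms unfolding projections_def by (auto simp: restr_eq_iff)

lemma restr_term_op_proj_or_zero:
  assumes T_absorbs: "\<And>xs L. length xs = n \<Longrightarrow> set xs \<subseteq> {..<k} \<Longrightarrow> length L = m \<Longrightarrow>
      set L \<subseteq> insert 0 (set xs) \<Longrightarrow> T L = 0"
    and "g \<in> term_op m T n"
  shows "restr k n g \<in> projections k n \<union> {restr k n (\<lambda>xs. 0)}"
  using assms(2)
proof induction
  case (proj i)
  then show ?case unfolding projections_def by blast
next
  case (app gs)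
  have "T (map (\<lambda>j. gs j xs) [0..<m]) = 0" if "length xs = n" "set xs \<subseteq> {..<k}" for xs
  proof (rule T_absorbs[OF that])
    show "set (map (\<lambda>j. gs j xs) [0..<m]) \<subseteq> insert 0 (set xs)"
      using value_in_args_if_proj_or_zero[OF app.IH that] by (simp add: image_subset_iff)
  qed simp
  then have "restr k n (\<lambda>xs. T (map (\<lambda>j. gs j xs) [0..<m])) = restr k n (\<lambda>xs. 0)"
    unfolding restr_eq_iff by blast
  then show ?case by simp
qed

theorem lemma3p1:
  fixes k n :: nat
  assumes "k \<ge> 3" and "1 \<le> n" and "n < k - 1"
  shows "clone_n k ((k - 1)^2) (T_op k) n = projections k n \<union> {restr k n (\<lambda>xs. 0)}"
proof -
  let ?m = "(k - 1)^2" and ?zero = "restr k n (\<lambda>xs. 0)"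
  have T_absorbs: "T_op k L = 0"
    if "length xs = n" "length L = ?m" "set L \<subseteq> insert 0 (set xs)" for xs L :: "nat list"
  proof (rule T_op_eq_0_if_few_values[where X = "set xs"])
    show "card (set xs) < k - 1" using card_length[of xs] that(1) assms(3) by simp
  qed (use that in simp_all)
  let ?diag = "\<lambda>xs. T_op k (map (\<lambda>j. xs ! 0) [0..<?m])"
  have "?diag \<in> term_op ?m (T_op k) n"
    by (rule term_op.app[where gs = "\<lambda>j ys. ys ! 0"], rule term_op.proj) (use assms(2) in simp)
  moreover have "?diag xs = 0" if "length xs = n" for xs
  proof (rule T_absorbs[OF that])
    show "set (map (\<lambda>j. xs ! 0) [0..<?m]) \<subseteq> insert 0 (set xs)"
      using that assms(2) by (auto simp: Suc_le_eq)
  qed simp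
  then have "restr k n ?diag = ?zero" unfolding restr_eq_iff by blast
  ultimately have "?zero \<in> clone_n k ?m (T_op k) n" unfolding clone_n_def by (metis image_eqI)
  moreover have "projections k n \<subseteq> clone_n k ?m (T_op k) n"
    unfolding projections_def clone_n_def by (auto intro: term_op.proj)
  moreover have "clone_n k ?m (T_op k) n \<subseteq> projections k n \<union> {?zero}"
  proof (unfold clone_n_def, rule image_subsetI)
    fix g assume "g \<in> term_op ?m (T_op k) n"
    then show "restr k n g \<in> projections k n \<union> {?zero}"
      by (rule restr_term_op_proj_or_zero[rotated]) (use T_absorbs in blast)
  qed
  ultimately show ?thesis by blast
qed
end
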